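(* For every $d \in \{2,3,4,5,8,11,12,16,24,40\}$, the sequence $\left(\left\lfloor n^{10}/d \right\rfloor\right)_{n \ge 1}$ is eventually prime-free.
   Context: A sequence $(a_n)_{n\ge 1}$ of positive integers is called eventually prime-free if there exists an index $n_0$ such that $a_n$ is composite for all $n \ge n_0$. (Here, as in the paper, this is understood as: only finitely many terms $a_n$ are prime.) *)

theory Defs
  imports "HOL-Computational_Algebra.Primes"
begin

definition eventually_prime_free :: "(nat \<Rightarrow> nat) \<Rightarrow> bool" where
  "eventually_prime_free a \<longleftrightarrow> finite {n. n \<ge> 1 \<and> prime (a n)}"

end

theory Submission
  imports Defs
begin

text \<open>
  Write \<open>n\<^sup>1\<^sup>0 = d q + r\<close> with \<open>r = n\<^sup>1\<^sup>0 mod d\<close>. For each listed \<open>d\<close> every tenth power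
  residue modulo \<open>d\<close> is a square \<open>s\<^sup>2\<close> with \<open>s \<le> 5\<close>, so \<open>d q = (n\<^sup>5 - s)(n\<^sup>5 + s)\<close>;
  once both factors exceed \<open>d\<close>, a prime \<open>q\<close> would have to divide one of them and
  force the other to be at most \<open>d\<close>. The single exception is the residue 24
  modulo 40: there \<open>n\<^sup>1\<^sup>0 \<equiv> -1 (mod 25)\<close> as well, whence \<open>5\<close> divides \<open>q\<close>.
\<close>

lemma eventually_prime_freeI:
  assumes "\<And>n. n0 \<le> n \<Longrightarrow> \<not> prime (a n)"
  shows "eventually_prime_free a"
  unfolding eventually_prime_free_def
proof (rule finite_subset)
  show "{n. 1 \<le> n \<and> prime (a n)} \<subseteq> {..<n0}" using assms leI by blast
qed simp

lemma not_prime_if_times_eq_large_factors: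
  fixes d q a b :: nat
  assumes prod: "d * q = a * b" and "d < a" "d < b"
  shows "\<not> prime q"
proof
  assume q: "prime q"
  have cofactor_le: "y \<le> d" if "q dvd x" "d * q = x * y" "d < x" for x y
  proof -
    from \<open>q dvd x\<close> obtain t where x: "x = q * t" by blast
    with \<open>d < x\<close> have "t > 0" by (cases t) auto
    have "q * d = q * (t * y)" using that(2) x by (simp add: ac_simps)
    then have "d = t * y" using prime_gt_0_nat[OF q] by simp
    with \<open>t > 0\<close> show "y \<le> d" by simp
  qed
  have "q dvd a * b" unfolding prod[symmetric] by simp
  with q have "q dvd a \<or> q dvd b" by (simp add: prime_dvd_mult_iff)
  then show False
  proof
    assume "q dvd a"
    then have "b \<le> d" using prod \<open>d < a\<close> by (rule cofactor_le)
    with \<open>d < b\<close> show False by simp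
  next
    assume "q dvd b"
    then have "a \<le> d" using prod[unfolded mult.commute[of a]] \<open>d < b\<close> by (rule cofactor_le)
    with \<open>d < a\<close> show False by simp
  qed
qed

lemma not_prime_square_div_if_mod_square:
  fixes a d s :: nat
  assumes "a\<^sup>2 mod d = s\<^sup>2" and "s + d < a"
  shows "\<not> prime (a\<^sup>2 div d)"
proof -
  have "d * (a\<^sup>2 div d) = a\<^sup>2 - s\<^sup>2"
    using assms(1) by (metis minus_mod_eq_mult_div)
  also have "\<dots> = (a - s) * (a + s)"
    using assms(2) by (simp add: power2_eq_square algebra_simps diff_mult_distrib)
  finally have "d * (a\<^sup>2 div d) = (a - s) * (a + s)" .
  then show ?thesis
    by (rule not_prime_if_times_eq_large_factors) (use assms(2) in auto)
qed

lemma power_mod_in_residues: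
  fixes n d k :: nat
  assumes "0 < d"
  shows "n ^ k mod d \<in> (\<lambda>r. r ^ k mod d) ` {..<d}"
proof
  show "n ^ k mod d = (n mod d) ^ k mod d" by (simp add: power_mod)
  show "n mod d \<in> {..<d}" using assms by simp
qed

lemma pow10_mod_in_squares_or_24:
  fixes n d :: nat
  assumes "d \<in> {2,3,4,5,8,11,12,16,24,40}"
  shows "n ^ 10 mod d \<in> power2 ` {..5} \<union> {24}"
proof -
  have "n ^ 10 mod d \<in> (\<lambda>r. r ^ 10 mod d) ` {..<d}"
    using assms by (intro power_mod_in_residues) auto
  moreover have "(\<lambda>r. r ^ 10 mod d) ` {..<d} \<subseteq> power2 ` {..5} \<union> {24}"
    using assms unfolding insert_iff empty_iff
    by (elim disjE; simp add: lessThan_nat_numeral lessThan_Suc atMost_nat_numeral atMost_Suc)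
  ultimately show ?thesis by blast
qed

lemma pow10_mod_25: "(n::nat) ^ 10 mod 25 \<in> {0, 1, 24}"
proof -
  have "n ^ 10 mod 25 \<in> (\<lambda>r. r ^ 10 mod 25) ` {..<25}"
    by (intro power_mod_in_residues) simp
  also have "(\<lambda>r. r ^ 10 mod 25) ` {..<25} = {0, 1, 24 :: nat}"
    by (simp add: lessThan_nat_numeral lessThan_Suc insert_commute)
  finally show ?thesis .
qed

lemma five_dvd_div_40_if_mod_25:
  fixes N :: nat
  assumes mod40: "N mod 40 = 24" and mod25: "N mod 25 \<in> {0, 1, 24}"
  shows "5 dvd N div 40"
proof -
  have "N mod 5 = 4"
    using mod40 mod_mod_cancel[of 5 40 N] by simp
  then have "N mod 25 = 24"
    using mod25 mod_mod_cancel[of 5 25 N] by auto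
  then have "5 * (8 * (N div 40)) = 5 * (5 * (N div 25))"
    using mod40 div_mult_mod_eq[of N 40] div_mult_mod_eq[of N 25] by linarith
  then have "5 dvd 8 * (N div 40)" by simp
  then show ?thesis by (simp add: prime_dvd_mult_iff)
qed

lemma not_prime_pow10_div:
  fixes d n :: nat
  assumes d: "d \<in> {2,3,4,5,8,11,12,16,24,40}" and "3 \<le> n"
  shows "\<not> prime (n ^ 10 div d)"
proof -
  have "243 \<le> n ^ 5" using power_mono[OF \<open>3 \<le> n\<close>, of 5] by simp
  from pow10_mod_in_squares_or_24[OF d, of n]
  consider s where "s \<le> 5" "n ^ 10 mod d = s\<^sup>2" | "n ^ 10 mod d = 24" by auto
  then show ?thesis
  proof cases
    case 1
    have "n ^ 10 = (n ^ 5)\<^sup>2" by (simp flip: power_mult)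
    moreover have "s + d < n ^ 5" using \<open>s \<le> 5\<close> \<open>243 \<le> n ^ 5\<close> d by auto
    ultimately show ?thesis
      using not_prime_square_div_if_mod_square[of "n ^ 5" d s] \<open>n ^ 10 mod d = s\<^sup>2\<close> by simp
  next
    case 2
    then have "d = 40" using d mod_less_divisor[of d "n ^ 10"] by auto
    have "5 dvd n ^ 10 div 40"
      using 2 \<open>d = 40\<close> pow10_mod_25 by (intro five_dvd_div_40_if_mod_25) auto
    moreover have "5 < n ^ 10 div 40" using power_mono[OF \<open>3 \<le> n\<close>, of 10] by simp
    ultimately have "\<not> prime (n ^ 10 div 40)" unfolding prime_nat_iff by auto
    with \<open>d = 40\<close> show ?thesis by simp
  qed
qed

theorem theorem7:
  fixes d :: nat
  assumes "d \<in> {2,3,4,5,8,11,12,16,24,40}"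
  shows "eventually_prime_free (\<lambda>n. n ^ 10 div d)"
  by (rule eventually_prime_freeI[of 3]) (rule not_prime_pow10_div[OF assms])

end
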